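(* In an ample-reserves equilibrium, the bank-level reserves $\tilde r$ and loans $\tilde\ell$, as functions of $(i,i_r)$ determined by the two equations $\frac{1+i}{1+i_r-\gamma'(\tilde r)}-1-\eta'(\tilde\ell)=0$ and $\gamma'(\tilde r)\tilde r-\gamma(\tilde r)+\eta'(\tilde\ell)\tilde\ell-\eta(\tilde\ell)-k=0$ (with $1+i_r-\gamma'(\tilde r)>0$), satisfy $$\frac{\partial\tilde\ell}{\partial i}>0,\qquad \frac{\partial\tilde r}{\partial i}<0,\qquad \frac{\partial\tilde\ell}{\partial i_r}<0,\qquad \frac{\partial\tilde r}{\partial i_r}>0.$$
   Context: Bank cost functions $\gamma,\eta:[0,\infty)\to[0,\infty)$ are twice differentiable with $\gamma',\gamma''>0$ and $\eta',\eta''>0$ on $(0,\infty)$, $\gamma(0)=\gamma'(0)=\eta(0)=\eta'(0)=0$; $k>0$ is an entry cost; $i\ge0$ is the nominal interest rate and $i_r$ the interest on reserves. In an ample-reserves equilibrium the bank's lending constraint does not bind and $\tilde r,\tilde\ell>0$ solve the two stated equations. *)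

theory Defs
  imports "HOL-Analysis.Analysis"
begin

end

theory Submission
  imports Defs
begin

text \<open>Differentiating the two equilibrium equations along a line through the point gives a
  linear system for the two derivatives. The zero-profit condition only involves the surplus
  functions \<open>x \<gamma>'(x) - \<gamma>(x)\<close>, whose derivatives are \<open>x \<gamma>''(x)\<close>, so it forces the loan and
  reserve derivatives to have opposite signs. Combined with the lending margin condition, Cramer's
  rule with a positive determinant shows that the loan derivative has the sign of the shock to the
  margin, which is positive for a rise in \<open>i\<close> and negative for a rise in \<open>i\<^sub>r\<close>.\<close>

lemma has_real_derivative_at_of_within_nonneg:
  assumes "(f has_real_derivative D) (at x within {0..})" "(x::real) > 0"
  shows "(f has_real_derivative D) (at x)"
proof -
  have "at x within {0..} = at x"
    by (rule at_within_open_subset[of x "{0<..}"]) (use assms(2) in auto)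
  with assms(1) show ?thesis by simp
qed

lemma DERIV_const_on_open:
  assumes "open T" "(t::real) \<in> T" "\<And>s. s \<in> T \<Longrightarrow> f s = (c::real)" "DERIV f t :> D"
  shows "D = 0"
proof -
  have "DERIV f t :> 0"
    by (rule has_field_derivative_transform_within_open[of "\<lambda>_. c" 0 t T]) (use assms in auto)
  with assms(4) show ?thesis by (rule DERIV_unique)
qed

lemma DERIV_deriv_compose:
  fixes F :: "'a::real_normed_vector \<Rightarrow> real"
  assumes "F differentiable (at (g t))" "g differentiable (at t)"
  shows "DERIV (\<lambda>s. F (g s)) t :> deriv (\<lambda>s. F (g s)) t"
  using differentiable_compose[OF assms(1,2)] DERIV_deriv_iff_real_differentiable
  by (simp add: o_def)

lemma DERIV_surplus:
  assumes "(g has_real_derivative g' x) (at x)" "(g' has_real_derivative g'' x) (at x)"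
  shows "((\<lambda>x. g' x * x - g x) has_real_derivative g'' x * x) (at x)"
  using DERIV_diff[OF DERIV_mult[OF assms(2) DERIV_ident] assms(1)] by simp

lemma linear_system_signs:
  fixes p q s t a b c :: real
  assumes "p > 0" "q > 0" "s > 0" "t > 0"
    and "p * a + q * b = 0" "- s * a + t * b = c"
  shows "sgn b = sgn c" "sgn a = - sgn c"
proof -
  have det: "q * s + p * t > 0"
    using assms(1-4) by (simp add: add_pos_pos)
  have "b * (q * s + p * t) = p * c" "a * (q * s + p * t) = - q * c"
    using assms(5,6) by algebra+
  then have "b = p * c / (q * s + p * t)" "a = - q * c / (q * s + p * t)"
    using det by (simp_all add: field_simps)
  then show "sgn b = sgn c" "sgn a = - sgn c"
    using assms(1,2) det by (simp_all add: sgn_mult)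
qed

lemma equilibrium_response_sgn:
  fixes \<gamma> \<gamma>' \<gamma>'' \<eta> \<eta>' \<eta>'' r l I J :: "real \<Rightarrow> real"
  assumes "open T" "t \<in> T"
    and zero_profit: "\<And>s. s \<in> T \<Longrightarrow>
          \<gamma>' (r s) * r s - \<gamma> (r s) + \<eta>' (l s) * l s - \<eta> (l s) = k"
    and margin: "\<And>s. s \<in> T \<Longrightarrow> (1 + J s - \<gamma>' (r s)) * (1 + \<eta>' (l s)) = 1 + I s"
    and \<gamma>_derivs: "(\<gamma> has_real_derivative \<gamma>' (r t)) (at (r t))"
        "(\<gamma>' has_real_derivative \<gamma>'' (r t)) (at (r t))"
    and \<eta>_derivs: "(\<eta> has_real_derivative \<eta>' (l t)) (at (l t))"
        "(\<eta>' has_real_derivative \<eta>'' (l t)) (at (l t))"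
    and pos: "r t > 0" "l t > 0" "\<gamma>'' (r t) > 0" "\<eta>'' (l t) > 0"
        "1 + J t - \<gamma>' (r t) > 0" "1 + \<eta>' (l t) > 0"
    and r_deriv: "DERIV r t :> a" and l_deriv: "DERIV l t :> b"
    and "DERIV I t :> dI" "DERIV J t :> dJ"
  shows "sgn b = sgn (dI - dJ * (1 + \<eta>' (l t))) \<and> sgn a = - sgn (dI - dJ * (1 + \<eta>' (l t)))"
proof -
  have "DERIV (\<lambda>s. (\<gamma>' (r s) * r s - \<gamma> (r s)) + (\<eta>' (l s) * l s - \<eta> (l s))) t
          :> \<gamma>'' (r t) * r t * a + \<eta>'' (l t) * l t * b"
    using DERIV_add[OF DERIV_chain2[OF DERIV_surplus[of \<gamma> \<gamma>' "r t" \<gamma>'', OF \<gamma>_derivs] r_deriv]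
                       DERIV_chain2[OF DERIV_surplus[of \<eta> \<eta>' "l t" \<eta>'', OF \<eta>_derivs] l_deriv]]
    by simp
  then have linear_zero_profit: "\<gamma>'' (r t) * r t * a + \<eta>'' (l t) * l t * b = 0"
    by (rule DERIV_const_on_open[where c = k, OF assms(1,2), rotated])
       (use zero_profit in \<open>simp add: algebra_simps\<close>)
  have "DERIV (\<lambda>s. (1 + J s - \<gamma>' (r s)) * (1 + \<eta>' (l s)) - (1 + I s)) t
          :> (dJ - \<gamma>'' (r t) * a) * (1 + \<eta>' (l t))
             + \<eta>'' (l t) * b * (1 + J t - \<gamma>' (r t)) - dI"
    using assms(17,18) r_deriv l_deriv
      DERIV_chain2[OF \<gamma>_derivs(2) r_deriv] DERIV_chain2[OF \<eta>_derivs(2) l_deriv]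
    by (auto intro!: derivative_eq_intros simp: algebra_simps)
  then have "(dJ - \<gamma>'' (r t) * a) * (1 + \<eta>' (l t))
      + \<eta>'' (l t) * b * (1 + J t - \<gamma>' (r t)) - dI = 0"
    by (rule DERIV_const_on_open[where c = 0, OF assms(1,2), rotated]) (simp add: margin)
  then have linear_margin: "- (\<gamma>'' (r t) * (1 + \<eta>' (l t))) * a
      + \<eta>'' (l t) * (1 + J t - \<gamma>' (r t)) * b = dI - dJ * (1 + \<eta>' (l t))"
    by (simp add: algebra_simps)
  show ?thesis
    using linear_system_signs[OF _ _ _ _ linear_zero_profit linear_margin] pos by simp
qed

theorem mainTheorem2:
  fixes \<gamma> \<gamma>' \<gamma>'' \<eta> \<eta>' \<eta>'' :: "real \<Rightarrow> real"
    and k :: real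
    and S :: "(real \<times> real) set"
    and rt lt :: "real \<times> real \<Rightarrow> real"
  assumes g1: "\<And>x. x \<ge> 0 \<Longrightarrow> (\<gamma> has_real_derivative \<gamma>' x) (at x within {0..})"
    and g2: "\<And>x. x \<ge> 0 \<Longrightarrow> (\<gamma>' has_real_derivative \<gamma>'' x) (at x within {0..})"
    and gpos: "\<And>x. x > 0 \<Longrightarrow> \<gamma>' x > 0 \<and> \<gamma>'' x > 0"
    and g0: "\<gamma> 0 = 0" "\<gamma>' 0 = 0"
    and gnn: "\<And>x. x \<ge> 0 \<Longrightarrow> \<gamma> x \<ge> 0"
    and e1: "\<And>x. x \<ge> 0 \<Longrightarrow> (\<eta> has_real_derivative \<eta>' x) (at x within {0..})"
    and e2: "\<And>x. x \<ge> 0 \<Longrightarrow> (\<eta>' has_real_derivative \<eta>'' x) (at x within {0..})"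
    and epos: "\<And>x. x > 0 \<Longrightarrow> \<eta>' x > 0 \<and> \<eta>'' x > 0"
    and e0: "\<eta> 0 = 0" "\<eta>' 0 = 0"
    and enn: "\<And>x. x \<ge> 0 \<Longrightarrow> \<eta> x \<ge> 0"
    and kpos: "k > 0"
    and Sopen: "open S"
    and Sdom: "\<And>i ir. (i, ir) \<in> S \<Longrightarrow> i \<ge> 0"
    and rpos: "\<And>p. p \<in> S \<Longrightarrow> rt p > 0"
    and lpos: "\<And>p. p \<in> S \<Longrightarrow> lt p > 0"
    and denom: "\<And>i ir. (i, ir) \<in> S \<Longrightarrow> 1 + ir - \<gamma>' (rt (i, ir)) > 0"
    and eqA: "\<And>i ir. (i, ir) \<in> S \<Longrightarrow>
              (1 + i) / (1 + ir - \<gamma>' (rt (i, ir))) - 1 - \<eta>' (lt (i, ir)) = 0"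
    and eqB: "\<And>i ir. (i, ir) \<in> S \<Longrightarrow>
              \<gamma>' (rt (i, ir)) * rt (i, ir) - \<gamma> (rt (i, ir))
              + \<eta>' (lt (i, ir)) * lt (i, ir) - \<eta> (lt (i, ir)) - k = 0"
    and rdiff: "\<And>p. p \<in> S \<Longrightarrow> rt differentiable (at p)"
    and ldiff: "\<And>p. p \<in> S \<Longrightarrow> lt differentiable (at p)"
    and pS: "(i, ir) \<in> S"
  shows "deriv (\<lambda>x. lt (x, ir)) i > 0 \<and> deriv (\<lambda>x. rt (x, ir)) i < 0 \<and>
         deriv (\<lambda>y. lt (i, y)) ir < 0 \<and> deriv (\<lambda>y. rt (i, y)) ir > 0"
proof -
  have r0: "rt (i, ir) > 0" and l0: "lt (i, ir) > 0"
    using rpos lpos pS by auto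
  have margin_pos: "1 + \<eta>' (lt (i, ir)) > 0"
    using epos[OF l0] by simp
  have cost_derivs:
    "(\<gamma> has_real_derivative \<gamma>' (rt (i, ir))) (at (rt (i, ir)))"
    "(\<gamma>' has_real_derivative \<gamma>'' (rt (i, ir))) (at (rt (i, ir)))"
    "(\<eta> has_real_derivative \<eta>' (lt (i, ir))) (at (lt (i, ir)))"
    "(\<eta>' has_real_derivative \<eta>'' (lt (i, ir))) (at (lt (i, ir)))"
    using g1 g2 e1 e2 r0 l0 by (simp_all add: has_real_derivative_at_of_within_nonneg)
  have margin: "(1 + ir' - \<gamma>' (rt (i', ir'))) * (1 + \<eta>' (lt (i', ir'))) = 1 + i'"
    if "(i', ir') \<in> S" for i' ir'
    using eqA[OF that] denom[OF that] by (simp add: field_simps)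
  have zero_profit: "\<gamma>' (rt (i', ir')) * rt (i', ir') - \<gamma> (rt (i', ir'))
      + \<eta>' (lt (i', ir')) * lt (i', ir') - \<eta> (lt (i', ir')) = k"
    if "(i', ir') \<in> S" for i' ir'
    using eqB[OF that] by simp
  have slices_open: "open ((\<lambda>x. (x, ir)) -` S)" "open ((\<lambda>y. (i, y)) -` S)"
    by (intro continuous_open_vimage[OF Sopen] continuous_intros)+
  have partials:
    "DERIV (\<lambda>x. rt (x, ir)) i :> deriv (\<lambda>x. rt (x, ir)) i"
    "DERIV (\<lambda>x. lt (x, ir)) i :> deriv (\<lambda>x. lt (x, ir)) i"
    "DERIV (\<lambda>y. rt (i, y)) ir :> deriv (\<lambda>y. rt (i, y)) ir"
    "DERIV (\<lambda>y. lt (i, y)) ir :> deriv (\<lambda>y. lt (i, y)) ir"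
    by (intro DERIV_deriv_compose rdiff[OF pS] ldiff[OF pS] derivative_intros)+
  note facts = slices_open pS margin zero_profit cost_derivs r0 l0 gpos epos denom partials margin_pos
  have "sgn (deriv (\<lambda>x. lt (x, ir)) i) = sgn (1 - 0 * (1 + \<eta>' (lt (i, ir))))
      \<and> sgn (deriv (\<lambda>x. rt (x, ir)) i) = - sgn (1 - 0 * (1 + \<eta>' (lt (i, ir))))"
    by (rule equilibrium_response_sgn[where T = "(\<lambda>x. (x, ir)) -` S" and t = i and k = k
          and I = "\<lambda>x. x" and J = "\<lambda>x. ir" and r = "\<lambda>x. rt (x, ir)" and l = "\<lambda>x. lt (x, ir)"
          and \<gamma> = \<gamma> and \<gamma>' = \<gamma>' and \<gamma>'' = \<gamma>'' and \<eta> = \<eta> and \<eta>' = \<eta>' and \<eta>'' = \<eta>''])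
       (use facts in \<open>auto intro!: derivative_intros\<close>)
  moreover
  have "sgn (deriv (\<lambda>y. lt (i, y)) ir) = sgn (0 - 1 * (1 + \<eta>' (lt (i, ir))))
      \<and> sgn (deriv (\<lambda>y. rt (i, y)) ir) = - sgn (0 - 1 * (1 + \<eta>' (lt (i, ir))))"
    by (rule equilibrium_response_sgn[where T = "(\<lambda>y. (i, y)) -` S" and t = ir and k = k
          and I = "\<lambda>y. i" and J = "\<lambda>y. y" and r = "\<lambda>y. rt (i, y)" and l = "\<lambda>y. lt (i, y)"
          and \<gamma> = \<gamma> and \<gamma>' = \<gamma>' and \<gamma>'' = \<gamma>'' and \<eta> = \<eta> and \<eta>' = \<eta>' and \<eta>'' = \<eta>''])
       (use facts in \<open>auto intro!: derivative_intros\<close>)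
  ultimately show ?thesis
    using margin_pos by (simp add: sgn_1_pos sgn_1_neg)
qed

end
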